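(* For every ground finite multiset of facts $F$ and all sentences $\varphi,\varphi_1,\varphi_2$ and $\exists P.\psi$: 1. $\mathrm{Init}_\varphi(F)\to^!\mathrm{Sat}(\mathsf{true})$ or $\mathrm{Init}_\varphi(F)\to^!\mathrm{Sat}(\mathsf{false})$, and these are the only possible normal forms of $\mathrm{Init}_\varphi(F)$. 2. $\mathrm{Init}_{\mathrm{False}}(F)\to^!\mathrm{Sat}(\mathsf{false})$ and never $\mathrm{Init}_{\mathrm{False}}(F)\to^!\mathrm{Sat}(\mathsf{true})$. 3. For all Booleans $B$: $\mathrm{Init}_\varphi(F)\to^!\mathrm{Sat}(B)$ iff $\mathrm{Init}_{\neg\varphi}(F)\to^!\mathrm{Sat}(\neg B)$. 4. $\mathrm{Init}_{\varphi_1\vee\varphi_2}(F)\to^!\mathrm{Sat}(\mathsf{true})$ iff $\mathrm{Init}_{\varphi_1}(F)\to^!\mathrm{Sat}(\mathsf{true})$ or $\mathrm{Init}_{\varphi_2}(F)\to^!\mathrm{Sat}(\mathsf{true})$. 5. $\mathrm{Init}_{\varphi_1\vee\varphi_2}(F)\to^!\mathrm{Sat}(\mathsf{false})$ iff $\mathrm{Init}_{\varphi_1}(F)\to^!\mathrm{Sat}(\mathsf{false})$ and $\mathrm{Init}_{\varphi_2}(F)\to^!\mathrm{Sat}(\mathsf{false})$. 6. $\mathrm{Init}_{\exists P.\psi}(F)\to^!\mathrm{Sat}(\mathsf{true})$ iff there exist a substitution $\sigma$ and a multiset $F'$ with $F'\circ\sigma(P_?\circ P_!)=F$ and $\mathrm{Init}_{\sigma(\psi)}(F)\to^!\mathrm{Sat}(\mathsf{true})$.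 7. $\mathrm{Init}_{\exists P.\psi}(F)\to^!\mathrm{Sat}(\mathsf{false})$ iff there exist ground multisets of facts $F_0,\dots,F_n$ and $G_0,\dots,G_{n-1}$ and substitutions $\sigma_0,\dots,\sigma_{n-1}$ such that (a) $F_0=F$, $F_{i+1}=G_i\circ\sigma_i(P_!)$ and $F_i=G_i\circ\sigma_i(P_!\circ P_?)$ for all $i\in\{0,\dots,n-1\}$; (b) $\mathrm{Init}_{\sigma_i(\psi)}(F)\to^!\mathrm{Sat}(\mathsf{false})$ for all $i\in\{0,\dots,n-1\}$; (c) there are no substitution $\sigma_n$ and multiset $G_n$ with $F_n=G_n\circ\sigma_n(P_!\circ P_?)$. 8. $\mathrm{Init}_{\varphi\vee\neg\varphi}(F)\to^!\mathrm{Sat}(\mathsf{true})$; and if both $\mathrm{Init}_\varphi(F)\to^!\mathrm{Sat}(\mathsf{true})$ and $\mathrm{Init}_\varphi(F)\to^!\mathrm{Sat}(\mathsf{false})$, then also $\mathrm{Init}_{\varphi\vee\neg\varphi}(F)\to^!\mathrm{Sat}(\mathsf{false})$.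
   Context: Setting. Fix an order-sorted signature $\Sigma$ with sorts $\mathsf{Fact}$, $\mathsf{Bool}$ and a $\Sigma$-algebra of facts $\mathcal{D}$ presented by structural axioms $A$ and confluent terminating equations, providing Boolean connectives and Boolean-valued equality; every ground $\mathsf{Bool}$ term reduces to $\mathsf{true}$ or $\mathsf{false}$. Multisets of facts: associative commutative $\circ$ with identity $\emptyset$. A terminating and preserving pattern $P$ is $[F_1]_!\circ[F_2]_?$ or $[F_2]_?$ ($F_1,F_2$ non-empty, possibly non-ground, multisets of facts); $P_!$, $P_?$ are the wrapped multisets ($P_!=\emptyset$ if absent). Conditions: $\mathrm{False}$, $\{B\}$ ($B:\mathsf{Bool}$), $\neg\psi$, $\psi_1\vee\psi_2$, $\exists P.\psi$; in $\exists P.\psi$ the quantifier binds in $\psi$ the variables of $P$ not bound by the context. $\mathrm{closed}(\varphi):=\mathrm{closed}(\varphi,\emptyset)$ with $\mathrm{closed}(\mathrm{False},V)=\mathsf{true}$, $\mathrm{closed}(\{t\},V)=(\mathrm{Var}(t)\subseteq V)$, $\mathrm{closed}(\neg\varphi,V)=\mathrm{closed}(\varphi,V)$, $\mathrm{closed}(\varphi_1\vee\varphi_2,V)=\mathrm{closed}(\varphi_1,V)\wedge\mathrm{closed}(\varphi_2,V)$, $\mathrm{closed}(\exists P.\varphi,V)=\mathrm{closed}(\varphi,V\cup\mathrm{Var}(P))$. A sentence is a closed condition. For a condition $\varphi$, the rewriting system $\mathcal{R}^{\mathrm{cond}}_{\Sigma,\mathcal{D}}(\varphi)$ has states $\{F,S\}^c$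 ($F$ ground multiset of facts, $S$ stack of frames, top at right) and terminal $\mathrm{Sat}(B)$. Frames: $\mathrm{Res}(B)$, $\mathrm{Not}$, and for subconditions $\psi$ of $\varphi$, variable lists $\vec v$ containing the free variables of $\psi$, ground values $\vec a$: $[\vec a]^{\vec v}_\psi$, $[\vec a]^{\vec v,\downarrow}_\psi$, and iterator frames $[F'\mid\vec a]^{\vec v}_{\exists P.\psi}$. With $\sigma=\{\vec a/\vec v\}$: (1) $[\vec a]_{\mathrm{False}}\mapsto\mathrm{Res}(\mathsf{false})$; (2) $[\vec a]_{\{B\}}\mapsto\mathrm{Res}(\sigma(B))$; (3) $[\vec a]_{\neg\psi}\mapsto\mathrm{Not}\,[\vec a]_\psi$; (4) $\mathrm{Not}\,\mathrm{Res}(B)\mapsto\mathrm{Res}(\neg B)$; (5) $[\vec a]_{\psi_1\vee\psi_2}\mapsto[\vec a]^{\downarrow}_{\psi_1}[\vec a]_{\psi_2}$; (6) $[\vec a]^\downarrow_\psi\mathrm{Res}(\mathsf{true})\mapsto\mathrm{Res}(\mathsf{true})$; (7) $[\vec a]^\downarrow_\psi\mathrm{Res}(\mathsf{false})\mapsto[\vec a]_\psi$; (8) $[\vec a]_{\exists P.\psi}\mapsto[F\mid\vec a]_{\exists P.\psi}$ ($F$ the database component); (9) if $\vec w$ lists the variables of $P$ not in $\vec v$, $\sigma'=\{\vec a/\vec v,\vec b/\vec w\}$, $F'=F''\circ\sigma'(P_!\circ P_?)$: $[F'\mid\vec a]_{\exists P.\psi}\mapsto[F''\circ\sigma'(P_!)\mid\vec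 a]_{\exists P.\psi}[\vec a,\vec b]^{\vec v,\vec w}_\psi$; (10) $[F'\mid\vec a]_{\exists P.\psi}\mathrm{Res}(\mathsf{false})\mapsto[F'\mid\vec a]_{\exists P.\psi}$; (11) $[F'\mid\vec a]_{\exists P.\psi}\mathrm{Res}(\mathsf{true})\mapsto\mathrm{Res}(\mathsf{true})$; (12) if no such matching of $F'$ exists, $[F'\mid\vec a]_{\exists P.\psi}\mapsto\mathrm{Res}(\mathsf{false})$; (13) $\{F,\mathrm{Res}(B)\}^c\to\mathrm{Sat}(B)$. Here "$X\mapsto Y$" denotes the rule $\{F,S\,X\}^c\to\{F,S\,Y\}^c$ for arbitrary $F,S$. $\mathrm{Init}_\varphi(F):=\{F,[\,]_\varphi\}^c$. $t\to^!t'$ means $t\to^*t'$ with $t'$ irreducible; for a sentence $\varphi$, statements about $\mathrm{Init}_\varphi(F)$ refer to $\mathcal{R}^{\mathrm{cond}}_{\Sigma,\mathcal{D}}(\varphi)$. *)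

theory Defs
  imports "HOL-Library.Multiset"
begin

datatype ('f, 'v) trm = Var 'v | Fn 'f "('f, 'v) trm list"

primrec tvars :: "('f, 'v) trm \<Rightarrow> 'v set" where
  "tvars (Var x) = {x}"
| "tvars (Fn f ts) = \<Union> (set (map tvars ts))"

definition ground :: "('f, 'v) trm \<Rightarrow> bool" where
  "ground t \<longleftrightarrow> tvars t = {}"

primrec tsubst :: "('v \<Rightarrow> ('f, 'v) trm) \<Rightarrow> ('f, 'v) trm \<Rightarrow> ('f, 'v) trm" where
  "tsubst \<sigma> (Var x) = \<sigma> x"
| "tsubst \<sigma> (Fn f ts) = Fn f (map (tsubst \<sigma>) ts)"

text \<open>Evaluation of ground terms in the algebra of facts (carrier 'd, interpretation I of
  the function symbols).  Variables are never evaluated (only ground terms are).\<close>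
primrec geval :: "('f \<Rightarrow> 'd list \<Rightarrow> 'd) \<Rightarrow> ('f, 'v) trm \<Rightarrow> 'd" where
  "geval I (Var x) = undefined"
| "geval I (Fn f ts) = I f (map (geval I) ts)"

text \<open>A ground Bool term holds iff it evaluates to the value of the constant true (symbol tr).\<close>
definition holds :: "('f \<Rightarrow> 'd list \<Rightarrow> 'd) \<Rightarrow> 'f \<Rightarrow> ('f, 'v) trm \<Rightarrow> bool" where
  "holds I tr t \<longleftrightarrow> geval I t = I tr []"

text \<open>CEx Pb Pq psi is the condition  exists P. psi  with P_! = Pb (empty if absent), P_? = Pq.\<close>
datatype ('f, 'v) cond =
    CFalse
  | CBool "('f, 'v) trm"
  | CNot "('f, 'v) cond"
  | COr "('f, 'v) cond" "('f, 'v) cond"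
  | CEx "('f, 'v) trm multiset" "('f, 'v) trm multiset" "('f, 'v) cond"

definition pvars :: "('f, 'v) trm multiset \<Rightarrow> ('f, 'v) trm multiset \<Rightarrow> 'v set" where
  "pvars Pb Pq = (\<Union>t \<in> set_mset (Pb + Pq). tvars t)"

primrec closed_in :: "('f, 'v) cond \<Rightarrow> 'v set \<Rightarrow> bool" where
  "closed_in CFalse V = True"
| "closed_in (CBool t) V = (tvars t \<subseteq> V)"
| "closed_in (CNot \<phi>) V = closed_in \<phi> V"
| "closed_in (COr \<phi>1 \<phi>2) V = (closed_in \<phi>1 V \<and> closed_in \<phi>2 V)"
| "closed_in (CEx Pb Pq \<phi>) V = closed_in \<phi> (V \<union> pvars Pb Pq)"

definition closed :: "('f, 'v) cond \<Rightarrow> bool" where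
  "closed \<phi> \<longleftrightarrow> closed_in \<phi> {}"

text \<open>All patterns are terminating and preserving: P_? non-empty (P_! arbitrary, empty = absent).\<close>
primrec wf_cond :: "('f, 'v) cond \<Rightarrow> bool" where
  "wf_cond CFalse = True"
| "wf_cond (CBool t) = True"
| "wf_cond (CNot \<phi>) = wf_cond \<phi>"
| "wf_cond (COr \<phi>1 \<phi>2) = (wf_cond \<phi>1 \<and> wf_cond \<phi>2)"
| "wf_cond (CEx Pb Pq \<phi>) = (Pq \<noteq> {#} \<and> wf_cond \<phi>)"

definition sentence :: "('f, 'v) cond \<Rightarrow> bool" where
  "sentence \<phi> \<longleftrightarrow> closed \<phi> \<and> wf_cond \<phi>"

text \<open>Substitution applied to a condition (to all occurrences, including in patterns).
  Used only with substitutions whose domain is the set of context-bound variables, so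
  no capture can occur.\<close>
primrec csubst :: "('v \<Rightarrow> ('f, 'v) trm) \<Rightarrow> ('f, 'v) cond \<Rightarrow> ('f, 'v) cond" where
  "csubst \<sigma> CFalse = CFalse"
| "csubst \<sigma> (CBool t) = CBool (tsubst \<sigma> t)"
| "csubst \<sigma> (CNot \<phi>) = CNot (csubst \<sigma> \<phi>)"
| "csubst \<sigma> (COr \<phi>1 \<phi>2) = COr (csubst \<sigma> \<phi>1) (csubst \<sigma> \<phi>2)"
| "csubst \<sigma> (CEx Pb Pq \<phi>) = CEx (image_mset (tsubst \<sigma>) Pb) (image_mset (tsubst \<sigma>) Pq) (csubst \<sigma> \<phi>)"

definition pat_subst :: "('f, 'v) trm multiset \<Rightarrow> ('f, 'v) trm multiset \<Rightarrow> ('v \<Rightarrow> ('f, 'v) trm) \<Rightarrow> bool" where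
  "pat_subst Pb Pq \<sigma> \<longleftrightarrow>
     (\<forall>x. (x \<in> pvars Pb Pq \<longrightarrow> ground (\<sigma> x)) \<and> (x \<notin> pvars Pb Pq \<longrightarrow> \<sigma> x = Var x))"

definition inst :: "('f \<Rightarrow> 'd list \<Rightarrow> 'd) \<Rightarrow> ('v \<Rightarrow> ('f, 'v) trm) \<Rightarrow> ('f, 'v) trm multiset \<Rightarrow> 'd multiset" where
  "inst I \<sigma> M = image_mset (\<lambda>t. geval I (tsubst \<sigma> t)) M"

definition env :: "'v list \<Rightarrow> ('f, 'v) trm list \<Rightarrow> 'v \<Rightarrow> ('f, 'v) trm" where
  "env vs as x = (case map_of (zip vs as) x of Some t \<Rightarrow> t | None \<Rightarrow> Var x)"

datatype ('f, 'v, 'd) frame =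
    Res bool
  | NotF
  | Ev "('f, 'v) trm list" "'v list" "('f, 'v) cond"
  | EvD "('f, 'v) trm list" "'v list" "('f, 'v) cond"
  | It "'d multiset" "('f, 'v) trm list" "'v list" "('f, 'v) cond"

datatype ('f, 'v, 'd) state = St "'d multiset" "('f, 'v, 'd) frame list" | Sat bool

definition pmatch :: "('f \<Rightarrow> 'd list \<Rightarrow> 'd) \<Rightarrow> 'd multiset \<Rightarrow> ('f, 'v) trm list \<Rightarrow> 'v list
    \<Rightarrow> ('f, 'v) trm multiset \<Rightarrow> ('f, 'v) trm multiset
    \<Rightarrow> 'v list \<Rightarrow> ('f, 'v) trm list \<Rightarrow> 'd multiset \<Rightarrow> bool" where
  "pmatch I F' as vs Pb Pq ws bs F'' \<longleftrightarrow>
     set ws = pvars Pb Pq - set vs \<and> distinct ws \<and> length bs = length ws \<and>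
     (\<forall>t \<in> set bs. ground t) \<and>
     F' = F'' + inst I (env (vs @ ws) (as @ bs)) (Pb + Pq)"

text \<open>Frame rewrites X |-> Y (stack top at the right), with database F.\<close>
inductive fstep :: "('f \<Rightarrow> 'd list \<Rightarrow> 'd) \<Rightarrow> 'f \<Rightarrow> 'd multiset
    \<Rightarrow> ('f, 'v, 'd) frame list \<Rightarrow> ('f, 'v, 'd) frame list \<Rightarrow> bool"
  for I :: "'f \<Rightarrow> 'd list \<Rightarrow> 'd" and tr :: 'f where
  r1: "fstep I tr F [Ev as vs CFalse] [Res False]"
| r2: "fstep I tr F [Ev as vs (CBool B)] [Res (holds I tr (tsubst (env vs as) B))]"
| r3: "fstep I tr F [Ev as vs (CNot \<psi>)] [NotF, Ev as vs \<psi>]"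
| r4: "fstep I tr F [NotF, Res b] [Res (\<not> b)]"
| r5: "fstep I tr F [Ev as vs (COr \<psi>1 \<psi>2)] [EvD as vs \<psi>1, Ev as vs \<psi>2]"
| r6: "fstep I tr F [EvD as vs \<psi>, Res True] [Res True]"
| r7: "fstep I tr F [EvD as vs \<psi>, Res False] [Ev as vs \<psi>]"
| r8: "fstep I tr F [Ev as vs (CEx Pb Pq \<psi>)] [It F as vs (CEx Pb Pq \<psi>)]"
| r9: "pmatch I F' as vs Pb Pq ws bs F'' \<Longrightarrow>
       fstep I tr F [It F' as vs (CEx Pb Pq \<psi>)]
         [It (F'' + inst I (env (vs @ ws) (as @ bs)) Pb) as vs (CEx Pb Pq \<psi>), Ev (as @ bs) (vs @ ws) \<psi>]"
| r10: "fstep I tr F [It F' as vs \<phi>, Res False] [It F' as vs \<phi>]"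
| r11: "fstep I tr F [It F' as vs \<phi>, Res True] [Res True]"
| r12: "\<not> (\<exists>ws bs F''. pmatch I F' as vs Pb Pq ws bs F'') \<Longrightarrow>
       fstep I tr F [It F' as vs (CEx Pb Pq \<psi>)] [Res False]"

inductive cstep :: "('f \<Rightarrow> 'd list \<Rightarrow> 'd) \<Rightarrow> 'f \<Rightarrow> ('f, 'v, 'd) state \<Rightarrow> ('f, 'v, 'd) state \<Rightarrow> bool"
  for I :: "'f \<Rightarrow> 'd list \<Rightarrow> 'd" and tr :: 'f where
  ctx: "fstep I tr F X Y \<Longrightarrow> cstep I tr (St F (S @ X)) (St F (S @ Y))"
| fin: "cstep I tr (St F [Res b]) (Sat b)"

definition nf_reach :: "('f \<Rightarrow> 'd list \<Rightarrow> 'd) \<Rightarrow> 'f \<Rightarrow> ('f, 'v, 'd) state \<Rightarrow> ('f, 'v, 'd) state \<Rightarrow> bool" where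
  "nf_reach I tr s t \<longleftrightarrow> (cstep I tr)\<^sup>*\<^sup>* s t \<and> \<not> (\<exists>u. cstep I tr t u)"

definition init :: "('f, 'v) cond \<Rightarrow> 'd multiset \<Rightarrow> ('f, 'v, 'd) state" where
  "init \<phi> F = St F [Ev [] [] \<phi>]"

abbreviation reaches :: "('f \<Rightarrow> 'd list \<Rightarrow> 'd) \<Rightarrow> 'f \<Rightarrow> ('f, 'v) cond \<Rightarrow> 'd multiset \<Rightarrow> bool \<Rightarrow> bool" where
  "reaches I tr \<phi> F b \<equiv> nf_reach I tr (init \<phi> F) (Sat b)"

end

theory Submission
  imports Defs
begin

(* The rewriting system is a stack machine; we replace it by a big-step relation eval_frame
   on single frames, with one rule for each way in which a frame is finally replaced by a
   result.  A frame X rewrites to the one-frame stack [Res b] iff eval_frame X b: one direction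
   lifts reductions under the rest of the stack, the other splits a reduction of P @ S at the
   first moment S has become a single result, by induction on the length of the reduction.
   On well-formed conditions eval_frame is total, since every match strictly shrinks the
   multiset of an iterator (P_? is non-empty); and every reachable stack consists of frames
   awaiting a result below a frame that can act, so Sat b are the only normal forms.
   Evaluating psi in the environment {a/v} is evaluating the substituted condition in the empty
   environment, so at top level the matches of rule (9) are exactly the pattern substitutions
   sigma, and the eight claims are read off the inversion rules of eval_frame. *)

lemma tsubst_ground: "ground t \<Longrightarrow> tsubst \<sigma> t = t"
  unfolding ground_def by (induction t) (auto intro: map_idI)

lemma env_notin:
  assumes "x \<notin> set vs"
  shows "env vs as x = Var x"
proof -
  have "x \<notin> fst ` set (zip vs as)"
    using assms by (auto dest: set_zip_leftD)
  then have "map_of (zip vs as) x = None"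
    by (simp add: map_of_eq_None_iff)
  then show ?thesis
    by (simp add: env_def)
qed

lemma env_in_set:
  assumes "length as = length vs" "x \<in> set vs"
  shows "env vs as x \<in> set as"
proof -
  obtain a where a: "map_of (zip vs as) x = Some a"
    using assms map_of_zip_is_Some[of vs as x] by auto
  then have "a \<in> set as"
    by (auto dest: map_of_SomeD set_zip_rightD)
  with a show ?thesis
    by (simp add: env_def)
qed

lemma env_append:
  assumes "length as = length vs"
  shows "env (vs @ vs') (as @ as') x = (if x \<in> set vs then env vs as x else env vs' as' x)"
proof (cases "x \<in> set vs")
  case True
  then obtain a where "map_of (zip vs as) x = Some a"
    using assms map_of_zip_is_Some[of vs as x] by auto
  with True assms show ?thesis
    by (simp add: env_def map_add_def)
next
  case False
  with assms have "map_of (zip vs as) x = None"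
    by simp
  with False assms show ?thesis
    by (simp add: env_def map_add_def del: map_of_zip_is_None)
qed

lemma tsubst_env_env:
  assumes "length as = length vs" "\<forall>a \<in> set as. ground a"
  shows "tsubst (env vs' as') (tsubst (env vs as) t) = tsubst (env (vs @ vs') (as @ as')) t"
proof (induction t)
  case (Var x)
  then show ?case
    using assms env_in_set[OF assms(1)] by (auto simp: env_append env_notin tsubst_ground)
qed simp

lemma tvars_tsubst_env:
  assumes "length as = length vs" "\<forall>a \<in> set as. ground a"
  shows "tvars (tsubst (env vs as) t) = tvars t - set vs"
proof (induction t)
  case (Var x)
  show ?case
  proof (cases "x \<in> set vs")
    case True
    then show ?thesis
      using assms env_in_set[OF assms(1)] by (auto simp: ground_def)
  qed (auto simp: env_notin)
qed auto

lemma pvars_image_tsubst_env: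
  assumes "length as = length vs" "\<forall>a \<in> set as. ground a"
  shows "pvars (image_mset (tsubst (env vs as)) Pb) (image_mset (tsubst (env vs as)) Pq) =
    pvars Pb Pq - set vs"
  unfolding pvars_def image_mset_union[symmetric] using tvars_tsubst_env[OF assms] by auto

lemma inst_image_tsubst_env:
  assumes "length as = length vs" "\<forall>a \<in> set as. ground a"
  shows "inst I (env vs' as') (image_mset (tsubst (env vs as)) M) =
    inst I (env (vs @ vs') (as @ as')) M"
  unfolding inst_def by (simp add: multiset.map_comp comp_def tsubst_env_env[OF assms])

lemma pmatch_append_iff:
  assumes "length as = length vs" "\<forall>a \<in> set as. ground a"
  shows "pmatch I F' (as @ as') (vs @ vs') Pb Pq ws bs F'' \<longleftrightarrow>
    pmatch I F' as' vs' (image_mset (tsubst (env vs as)) Pb) (image_mset (tsubst (env vs as)) Pq)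
      ws bs F''"
  unfolding pmatch_def pvars_image_tsubst_env[OF assms] image_mset_union[symmetric]
    inst_image_tsubst_env[OF assms]
  by (auto simp: Diff_eq Int_assoc)

lemma size_pmatch_remainder_less:
  assumes "pmatch I F' as vs Pb Pq ws bs F''" "Pq \<noteq> {#}"
  shows "size (F'' + inst I (env (vs @ ws) (as @ bs)) Pb) < size F'"
  using assms by (simp add: pmatch_def inst_def nonempty_has_size)

lemma finite_tvars: "finite (tvars t)"
  by (induction t) auto

lemma pat_subst_iff_env:
  "pat_subst Pb Pq \<sigma> \<longleftrightarrow>
    (\<exists>ws bs. \<sigma> = env ws bs \<and> set ws = pvars Pb Pq \<and> distinct ws \<and> length bs = length ws \<and>
      (\<forall>t \<in> set bs. ground t))"
proof
  assume \<sigma>: "pat_subst Pb Pq \<sigma>"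
  obtain ws where ws: "set ws = pvars Pb Pq" "distinct ws"
    using finite_distinct_list[of "pvars Pb Pq"] by (auto simp: pvars_def finite_tvars)
  have "env ws (map \<sigma> ws) = \<sigma>"
    using \<sigma> ws(1) by (auto simp: env_def map_of_zip_map pat_subst_def)
  with \<sigma> ws show "\<exists>ws bs. \<sigma> = env ws bs \<and> set ws = pvars Pb Pq \<and> distinct ws \<and>
      length bs = length ws \<and> (\<forall>t \<in> set bs. ground t)"
    by (intro exI[of _ ws] exI[of _ "map \<sigma> ws"]) (auto simp: pat_subst_def)
next
  assume "\<exists>ws bs. \<sigma> = env ws bs \<and> set ws = pvars Pb Pq \<and> distinct ws \<and>
      length bs = length ws \<and> (\<forall>t \<in> set bs. ground t)"
  then show "pat_subst Pb Pq \<sigma>"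
    unfolding pat_subst_def by (metis env_in_set env_notin)
qed

lemma ex_pmatch_Nil_iff:
  "(\<exists>ws bs G. pmatch I F' [] [] Pb Pq ws bs G \<and> P (env ws bs) G) \<longleftrightarrow>
    (\<exists>\<sigma> G. pat_subst Pb Pq \<sigma> \<and> F' = G + inst I \<sigma> (Pb + Pq) \<and> P \<sigma> G)"
  unfolding pmatch_def pat_subst_iff_env by auto

lemma size_match_remainder_less:
  assumes "F' = G + inst I \<sigma> (Pb + Pq)" "Pq \<noteq> {#}"
  shows "size (G + inst I \<sigma> Pb) < size F'"
  using assms by (simp add: inst_def nonempty_has_size)

definition refuting_run ::
    "('f \<Rightarrow> 'd list \<Rightarrow> 'd) \<Rightarrow> ('f, 'v) trm multiset \<Rightarrow> ('f, 'v) trm multiset \<Rightarrow>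
      (('v \<Rightarrow> ('f, 'v) trm) \<Rightarrow> bool) \<Rightarrow> nat \<Rightarrow> (nat \<Rightarrow> 'd multiset) \<Rightarrow> (nat \<Rightarrow> 'd multiset) \<Rightarrow>
      (nat \<Rightarrow> 'v \<Rightarrow> ('f, 'v) trm) \<Rightarrow> bool" where
  "refuting_run I Pb Pq refuted n Fs Gs \<sigma>s \<longleftrightarrow>
    (\<forall>i < n. pat_subst Pb Pq (\<sigma>s i) \<and> Fs (Suc i) = Gs i + inst I (\<sigma>s i) Pb \<and>
      Fs i = Gs i + inst I (\<sigma>s i) (Pb + Pq)) \<and>
    (\<forall>i < n. refuted (\<sigma>s i)) \<and>
    \<not> (\<exists>\<sigma> G. pat_subst Pb Pq \<sigma> \<and> Fs n = G + inst I \<sigma> (Pb + Pq))"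

lemma refuting_run_0_iff:
  "refuting_run I Pb Pq refuted 0 Fs Gs \<sigma>s \<longleftrightarrow>
    \<not> (\<exists>\<sigma> G. pat_subst Pb Pq \<sigma> \<and> Fs 0 = G + inst I \<sigma> (Pb + Pq))"
  by (simp add: refuting_run_def)

lemma refuting_run_Suc_iff:
  "refuting_run I Pb Pq refuted (Suc n) Fs Gs \<sigma>s \<longleftrightarrow>
    pat_subst Pb Pq (\<sigma>s 0) \<and> Fs 1 = Gs 0 + inst I (\<sigma>s 0) Pb \<and>
    Fs 0 = Gs 0 + inst I (\<sigma>s 0) (Pb + Pq) \<and> refuted (\<sigma>s 0) \<and>
    refuting_run I Pb Pq refuted n (Fs \<circ> Suc) (Gs \<circ> Suc) (\<sigma>s \<circ> Suc)"
  unfolding refuting_run_def by (auto simp: All_less_Suc2)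

fun awaits_result :: "('f, 'v, 'd) frame \<Rightarrow> bool" where
  "awaits_result NotF = True"
| "awaits_result (EvD _ _ _) = True"
| "awaits_result (It _ _ _ (CEx _ _ _)) = True"
| "awaits_result _ = False"

fun can_act :: "('f, 'v, 'd) frame \<Rightarrow> bool" where
  "can_act (Ev _ _ _) = True"
| "can_act (Res _) = True"
| "can_act (It _ _ _ (CEx _ _ _)) = True"
| "can_act _ = False"

definition wf_stack :: "('f, 'v, 'd) frame list \<Rightarrow> bool" where
  "wf_stack S \<longleftrightarrow> (\<exists>S0 A. S = S0 @ [A] \<and> list_all awaits_result S0 \<and> can_act A)"

lemma awaits_result_It_iff_can_act: "awaits_result (It F' as vs \<phi>) \<longleftrightarrow> can_act (It F' as vs \<phi>)"
  by (cases \<phi>) auto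

lemma wf_stack_snoc: "wf_stack (S @ [A]) \<longleftrightarrow> list_all awaits_result S \<and> can_act A"
  unfolding wf_stack_def by auto

lemma wf_stack_snoc2:
  "wf_stack (S @ [A, B]) \<longleftrightarrow> list_all awaits_result S \<and> awaits_result A \<and> can_act B"
  using wf_stack_snoc[of "S @ [A]" B] by auto

context
  fixes I :: "'f \<Rightarrow> 'd list \<Rightarrow> 'd" and tr :: 'f and F :: "'d multiset"
begin

inductive eval_frame :: "('f, 'v, 'd) frame \<Rightarrow> bool \<Rightarrow> bool" where
  false: "eval_frame (Ev as vs CFalse) False"
| bool: "eval_frame (Ev as vs (CBool B)) (holds I tr (tsubst (env vs as) B))"
| neg: "eval_frame (Ev as vs \<psi>) b \<Longrightarrow> eval_frame (Ev as vs (CNot \<psi>)) (\<not> b)"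
| or_true: "eval_frame (Ev as vs \<psi>2) True \<Longrightarrow> eval_frame (Ev as vs (COr \<psi>1 \<psi>2)) True"
| or_false: "eval_frame (Ev as vs \<psi>2) False \<Longrightarrow> eval_frame (Ev as vs \<psi>1) b \<Longrightarrow>
    eval_frame (Ev as vs (COr \<psi>1 \<psi>2)) b"
| ex: "eval_frame (It F as vs (CEx Pb Pq \<psi>)) b \<Longrightarrow> eval_frame (Ev as vs (CEx Pb Pq \<psi>)) b"
| it_true: "pmatch I F' as vs Pb Pq ws bs F'' \<Longrightarrow> eval_frame (Ev (as @ bs) (vs @ ws) \<psi>) True \<Longrightarrow>
    eval_frame (It F' as vs (CEx Pb Pq \<psi>)) True"
| it_false: "pmatch I F' as vs Pb Pq ws bs F'' \<Longrightarrow> eval_frame (Ev (as @ bs) (vs @ ws) \<psi>) False \<Longrightarrow>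
    eval_frame (It (F'' + inst I (env (vs @ ws) (as @ bs)) Pb) as vs (CEx Pb Pq \<psi>)) b \<Longrightarrow>
    eval_frame (It F' as vs (CEx Pb Pq \<psi>)) b"
| it_none: "\<not> (\<exists>ws bs F''. pmatch I F' as vs Pb Pq ws bs F'') \<Longrightarrow>
    eval_frame (It F' as vs (CEx Pb Pq \<psi>)) False"

lemma eval_frame_CFalse_iff: "eval_frame (Ev as vs CFalse) b \<longleftrightarrow> \<not> b"
  by (auto elim: eval_frame.cases intro: eval_frame.false)

lemma eval_frame_CBool_iff:
  "eval_frame (Ev as vs (CBool B)) b \<longleftrightarrow> b = holds I tr (tsubst (env vs as) B)"
  by (auto elim: eval_frame.cases intro: eval_frame.bool)

lemma eval_frame_CNot_iff: "eval_frame (Ev as vs (CNot \<psi>)) b \<longleftrightarrow> eval_frame (Ev as vs \<psi>) (\<not> b)"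
  by (auto elim: eval_frame.cases dest: eval_frame.neg)

lemma eval_frame_COr_iff:
  "eval_frame (Ev as vs (COr \<psi>1 \<psi>2)) b \<longleftrightarrow>
     b \<and> eval_frame (Ev as vs \<psi>2) True \<or>
     eval_frame (Ev as vs \<psi>2) False \<and> eval_frame (Ev as vs \<psi>1) b"
  by (auto elim: eval_frame.cases intro: eval_frame.or_true eval_frame.or_false)

lemma eval_frame_CEx_iff:
  "eval_frame (Ev as vs (CEx Pb Pq \<psi>)) b \<longleftrightarrow> eval_frame (It F as vs (CEx Pb Pq \<psi>)) b"
  by (auto elim: eval_frame.cases intro: eval_frame.ex)

(* Not a simp rule: the right-hand side contains an iterator frame again. *)
lemma eval_frame_It_iff:
  "eval_frame (It F' as vs (CEx Pb Pq \<psi>)) b \<longleftrightarrow>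
     (\<exists>ws bs F''. pmatch I F' as vs Pb Pq ws bs F'' \<and>
        (b \<and> eval_frame (Ev (as @ bs) (vs @ ws) \<psi>) True \<or>
         eval_frame (Ev (as @ bs) (vs @ ws) \<psi>) False \<and>
         eval_frame (It (F'' + inst I (env (vs @ ws) (as @ bs)) Pb) as vs (CEx Pb Pq \<psi>)) b)) \<or>
     \<not> (\<exists>ws bs F''. pmatch I F' as vs Pb Pq ws bs F'') \<and> \<not> b"
  by (auto elim: eval_frame.cases intro: eval_frame.it_true eval_frame.it_false)
    (use eval_frame.it_none in blast)

lemma eval_frame_total: "wf_cond \<psi> \<Longrightarrow> \<exists>b. eval_frame (Ev as vs \<psi>) b"
proof (induction \<psi> arbitrary: as vs)
  case (CEx Pb Pq \<psi>)
  have "\<exists>b. eval_frame (It F' as vs (CEx Pb Pq \<psi>)) b" for F'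
  proof (induction "size F'" arbitrary: F' rule: less_induct)
    case less
    show ?case
    proof (cases "\<exists>ws bs F''. pmatch I F' as vs Pb Pq ws bs F''")
      case True
      then obtain ws bs F'' where match: "pmatch I F' as vs Pb Pq ws bs F''"
        by blast
      moreover obtain c where "eval_frame (Ev (as @ bs) (vs @ ws) \<psi>) c"
        using CEx by auto
      moreover have "Pq \<noteq> {#}"
        using CEx.prems by simp
      then obtain b where
        "eval_frame (It (F'' + inst I (env (vs @ ws) (as @ bs)) Pb) as vs (CEx Pb Pq \<psi>)) b"
        using less.hyps[OF size_pmatch_remainder_less[OF match]] by blast
      ultimately show ?thesis
        by (cases c) (auto intro: eval_frame.it_true eval_frame.it_false)
    next
      case False
      then show ?thesis
        by (metis eval_frame.it_none)
    qed
  qed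
  then show ?case
    by (simp add: eval_frame_CEx_iff)
next
  case (CNot \<psi>)
  then obtain c where "eval_frame (Ev as vs \<psi>) c"
    by auto
  then show ?case
    by (auto intro: eval_frame.neg)
next
  case (COr \<psi>1 \<psi>2)
  then obtain c1 c2 where "eval_frame (Ev as vs \<psi>1) c1" "eval_frame (Ev as vs \<psi>2) c2"
    by (meson wf_cond.simps(4))
  then show ?case
    by (cases c2) (auto intro: eval_frame.or_true eval_frame.or_false)
qed (auto intro: eval_frame.false eval_frame.bool)

lemma eval_frame_Ev_append_iff:
  assumes "length as = length vs" "\<forall>a \<in> set as. ground a" "wf_cond \<psi>"
  shows "eval_frame (Ev (as @ as') (vs @ vs') \<psi>) b \<longleftrightarrow>
    eval_frame (Ev as' vs' (csubst (env vs as) \<psi>)) b"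
  using assms(3)
proof (induction \<psi> arbitrary: as' vs' b)
  case (CBool B)
  then show ?case
    by (simp add: eval_frame_CBool_iff tsubst_env_env[OF assms(1,2)])
next
  case (CEx Pb Pq \<chi>)
  let ?\<sigma> = "env vs as"
  let ?\<chi> = "CEx (image_mset (tsubst ?\<sigma>) Pb) (image_mset (tsubst ?\<sigma>) Pq) (csubst ?\<sigma> \<chi>)"
  have "eval_frame (It F' (as @ as') (vs @ vs') (CEx Pb Pq \<chi>)) b \<longleftrightarrow>
      eval_frame (It F' as' vs' ?\<chi>) b" for F' b
  proof (induction "size F'" arbitrary: F' b rule: less_induct)
    case less
    have ev: "eval_frame (Ev (as @ as' @ bs) (vs @ vs' @ ws) \<chi>) c \<longleftrightarrow>
        eval_frame (Ev (as' @ bs) (vs' @ ws) (csubst ?\<sigma> \<chi>)) c" for ws bs c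
      using CEx.IH[of "as' @ bs" "vs' @ ws"] CEx.prems by simp
    have rest: "eval_frame
          (It (F'' + inst I (env (vs @ vs' @ ws) (as @ as' @ bs)) Pb) (as @ as') (vs @ vs')
            (CEx Pb Pq \<chi>)) c
        \<longleftrightarrow> eval_frame
          (It (F'' + inst I (env (vs' @ ws) (as' @ bs)) (image_mset (tsubst ?\<sigma>) Pb)) as' vs' ?\<chi>) c"
      if "pmatch I F' as' vs' (image_mset (tsubst ?\<sigma>) Pb) (image_mset (tsubst ?\<sigma>) Pq) ws bs F''"
      for ws bs F'' c
    proof -
      have "pmatch I F' (as @ as') (vs @ vs') Pb Pq ws bs F''"
        using that by (simp add: pmatch_append_iff[OF assms(1,2)])
      moreover have "Pq \<noteq> {#}"
        using CEx.prems by simp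
      ultimately have smaller:
        "size (F'' + inst I (env (vs @ vs' @ ws) (as @ as' @ bs)) Pb) < size F'"
        using size_pmatch_remainder_less by fastforce
      have "inst I (env (vs' @ ws) (as' @ bs)) (image_mset (tsubst ?\<sigma>) Pb) =
          inst I (env (vs @ vs' @ ws) (as @ as' @ bs)) Pb"
        by (rule inst_image_tsubst_env[OF assms(1,2)])
      then show ?thesis
        by (simp only: less.hyps[OF smaller])
    qed
    show ?case
      by (subst (1 2) eval_frame_It_iff)
        (simp only: pmatch_append_iff[OF assms(1,2)] append_assoc ev rest cong: conj_cong,
         simp add: pmatch_append_iff[OF assms(1,2)])
  qed
  then show ?case
    by (simp add: eval_frame_CEx_iff)
qed (auto simp: eval_frame_CFalse_iff eval_frame_CNot_iff eval_frame_COr_iff)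

lemma eval_frame_It_Nil_iff:
  assumes "wf_cond \<psi>"
  shows "eval_frame (It F' [] [] (CEx Pb Pq \<psi>)) b \<longleftrightarrow>
    (\<exists>\<sigma> G. pat_subst Pb Pq \<sigma> \<and> F' = G + inst I \<sigma> (Pb + Pq) \<and>
      (b \<and> eval_frame (Ev [] [] (csubst \<sigma> \<psi>)) True \<or>
       eval_frame (Ev [] [] (csubst \<sigma> \<psi>)) False \<and>
       eval_frame (It (G + inst I \<sigma> Pb) [] [] (CEx Pb Pq \<psi>)) b)) \<or>
    \<not> (\<exists>\<sigma> G. pat_subst Pb Pq \<sigma> \<and> F' = G + inst I \<sigma> (Pb + Pq)) \<and> \<not> b"
proof -
  have ev: "eval_frame (Ev bs ws \<psi>) c \<longleftrightarrow> eval_frame (Ev [] [] (csubst (env ws bs) \<psi>)) c"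
    if "pmatch I F' [] [] Pb Pq ws bs G" for ws bs G c
  proof -
    have "length bs = length ws" "\<forall>t \<in> set bs. ground t"
      using that by (simp_all add: pmatch_def)
    from eval_frame_Ev_append_iff[OF this assms, where as' = "[]" and vs' = "[]"] show ?thesis
      by simp
  qed
  define step where "step \<sigma> G \<longleftrightarrow>
    b \<and> eval_frame (Ev [] [] (csubst \<sigma> \<psi>)) True \<or>
    eval_frame (Ev [] [] (csubst \<sigma> \<psi>)) False \<and>
    eval_frame (It (G + inst I \<sigma> Pb) [] [] (CEx Pb Pq \<psi>)) b" for \<sigma> G
  have "eval_frame (It F' [] [] (CEx Pb Pq \<psi>)) b \<longleftrightarrow>
    (\<exists>ws bs G. pmatch I F' [] [] Pb Pq ws bs G \<and> step (env ws bs) G) \<or>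
    \<not> (\<exists>ws bs G. pmatch I F' [] [] Pb Pq ws bs G \<and> True) \<and> \<not> b"
    unfolding step_def
    by (subst eval_frame_It_iff) (simp only: append_Nil ev simp_thms cong: conj_cong)
  then show ?thesis
    unfolding ex_pmatch_Nil_iff[where P = step] ex_pmatch_Nil_iff[where P = "\<lambda>_ _. True"]
    by (simp add: step_def)
qed

lemma eval_frame_It_Nil_True_iff:
  assumes "wf_cond (CEx Pb Pq \<psi>)"
  shows "eval_frame (It F' [] [] (CEx Pb Pq \<psi>)) True \<longleftrightarrow>
    (\<exists>\<sigma> G. pat_subst Pb Pq \<sigma> \<and> F' = G + inst I \<sigma> (Pb + Pq) \<and>
      eval_frame (Ev [] [] (csubst \<sigma> \<psi>)) True)"
    (is "?lhs F' \<longleftrightarrow> ?rhs F'")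
proof
  show "?rhs F' \<Longrightarrow> ?lhs F'"
    using assms by (subst eval_frame_It_Nil_iff) auto
  show "?lhs F' \<Longrightarrow> ?rhs F'"
  proof (induction "size F'" arbitrary: F' rule: less_induct)
    case less
    have wf: "wf_cond \<psi>"
      using assms by simp
    consider "?rhs F'"
      | \<sigma> G where "pat_subst Pb Pq \<sigma>" "F' = G + inst I \<sigma> (Pb + Pq)" "?lhs (G + inst I \<sigma> Pb)"
      using eval_frame_It_Nil_iff[OF wf, THEN iffD1, OF less.prems] by blast
    then show ?case
    proof cases
      case (2 \<sigma> G)
      have "size (G + inst I \<sigma> Pb) < size F'"
        using size_match_remainder_less[OF 2(2)] assms by simp
      with 2 less.hyps obtain \<sigma>' G' where "pat_subst Pb Pq \<sigma>'"
        "G + inst I \<sigma> Pb = G' + inst I \<sigma>' (Pb + Pq)" "eval_frame (Ev [] [] (csubst \<sigma>' \<psi>)) True"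
        by blast
      \<comment> \<open>a match in the remainder is also a match in F', which only adds the instance of P_?\<close>
      moreover from this(2) 2(2) have "F' = (G' + inst I \<sigma> Pq) + inst I \<sigma>' (Pb + Pq)"
        by (simp add: inst_def add_ac)
      ultimately show ?thesis
        by blast
    qed
  qed
qed

lemma eval_frame_It_Nil_False_if_refuting_run:
  assumes "wf_cond \<psi>"
    and "refuting_run I Pb Pq (\<lambda>\<sigma>. eval_frame (Ev [] [] (csubst \<sigma> \<psi>)) False) n Fs Gs \<sigma>s"
  shows "eval_frame (It (Fs 0) [] [] (CEx Pb Pq \<psi>)) False"
  using assms(2)
proof (induction n arbitrary: Fs Gs \<sigma>s)
  case 0
  then show ?case
    using assms(1) by (subst eval_frame_It_Nil_iff) (auto simp: refuting_run_0_iff)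
next
  case (Suc n)
  then have "eval_frame (It (Fs 1) [] [] (CEx Pb Pq \<psi>)) False"
    using Suc.IH[of "Fs \<circ> Suc" "Gs \<circ> Suc" "\<sigma>s \<circ> Suc"] by (auto simp: refuting_run_Suc_iff comp_def)
  with Suc.prems show ?case
    using assms(1) by (subst eval_frame_It_Nil_iff) (auto simp: refuting_run_Suc_iff)
qed

lemma eval_frame_It_Nil_False_iff:
  assumes "wf_cond (CEx Pb Pq \<psi>)"
  shows "eval_frame (It F' [] [] (CEx Pb Pq \<psi>)) False \<longleftrightarrow>
    (\<exists>n Fs Gs \<sigma>s. Fs 0 = F' \<and>
      refuting_run I Pb Pq (\<lambda>\<sigma>. eval_frame (Ev [] [] (csubst \<sigma> \<psi>)) False) n Fs Gs \<sigma>s)"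
    (is "?lhs F' \<longleftrightarrow> (\<exists>n Fs Gs \<sigma>s. Fs 0 = F' \<and> ?run n Fs Gs \<sigma>s)")
proof
  have wf: "wf_cond \<psi>"
    using assms by simp
  show "?lhs F' \<Longrightarrow> \<exists>n Fs Gs \<sigma>s. Fs 0 = F' \<and> ?run n Fs Gs \<sigma>s"
  proof (induction "size F'" arbitrary: F' rule: less_induct)
    case less
    consider "\<not> (\<exists>\<sigma> G. pat_subst Pb Pq \<sigma> \<and> F' = G + inst I \<sigma> (Pb + Pq))"
      | \<sigma> G where "pat_subst Pb Pq \<sigma>" "F' = G + inst I \<sigma> (Pb + Pq)"
          "eval_frame (Ev [] [] (csubst \<sigma> \<psi>)) False" "?lhs (G + inst I \<sigma> Pb)"
      using eval_frame_It_Nil_iff[OF wf, THEN iffD1, OF less.prems] by blast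
    then show ?case
    proof cases
      case 1
      then show ?thesis
        by (intro exI[of _ 0] exI[of _ "\<lambda>_. F'"]) (simp add: refuting_run_0_iff)
    next
      case (2 \<sigma> G)
      have "size (G + inst I \<sigma> Pb) < size F'"
        using size_match_remainder_less[OF 2(2)] assms by simp
      with 2 less.hyps obtain n Fs Gs \<sigma>s where "Fs 0 = G + inst I \<sigma> Pb" "?run n Fs Gs \<sigma>s"
        by blast
      with 2 have "?run (Suc n) (case_nat F' Fs) (case_nat G Gs) (case_nat \<sigma> \<sigma>s)"
        by (simp add: refuting_run_Suc_iff comp_def)
      then show ?thesis
        by (intro exI[of _ "Suc n"] exI[of _ "case_nat F' Fs"] exI[of _ "case_nat G Gs"]
            exI[of _ "case_nat \<sigma> \<sigma>s"]) simp
    qed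
  qed
  show "\<exists>n Fs Gs \<sigma>s. Fs 0 = F' \<and> ?run n Fs Gs \<sigma>s \<Longrightarrow> ?lhs F'"
    using eval_frame_It_Nil_False_if_refuting_run[OF wf] by blast
qed

definition sstep :: "('f, 'v, 'd) frame list \<Rightarrow> ('f, 'v, 'd) frame list \<Rightarrow> bool" where
  "sstep S T \<longleftrightarrow> (\<exists>S0 X Y. S = S0 @ X \<and> T = S0 @ Y \<and> fstep I tr F X Y)"

lemma fstep_shape:
  "fstep I tr F X Y \<Longrightarrow> (\<exists>A. X = [A] \<or> (\<exists>c. X = [A, Res c])) \<and> Y \<noteq> []"
  by (cases rule: fstep.cases) auto

lemma fstep_Res: "\<not> fstep I tr F [Res c] Y"
  by (auto elim: fstep.cases)

lemma sstep_if_fstep: "fstep I tr F X Y \<Longrightarrow> sstep X Y"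
  unfolding sstep_def by (metis append_Nil)

lemma sstep_append_left: "sstep S T \<Longrightarrow> sstep (P @ S) (P @ T)"
  unfolding sstep_def by (metis append.assoc)

lemma rtranclp_sstep_append_left: "sstep\<^sup>*\<^sup>* S T \<Longrightarrow> sstep\<^sup>*\<^sup>* (P @ S) (P @ T)"
  by (induction rule: rtranclp_induct) (auto intro: rtranclp.rtrancl_into_rtrancl sstep_append_left)

lemma sstep_not_Nil: "sstep S T \<Longrightarrow> T \<noteq> []"
  unfolding sstep_def using fstep_shape by fastforce

lemma sstep_singleton: "sstep [A] T \<Longrightarrow> fstep I tr F [A] T"
  unfolding sstep_def using fstep_shape by (fastforce simp: Cons_eq_append_conv)

lemma sstep_pair: "sstep [A, Res c] T \<Longrightarrow> fstep I tr F [A, Res c] T"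
  unfolding sstep_def using fstep_shape fstep_Res by (fastforce simp: Cons_eq_append_conv)

lemma sstep_Res: "\<not> sstep [Res c] T"
  using sstep_singleton fstep_Res by metis

lemma relpowp_sstep_Res:
  assumes "(sstep ^^ n) [Res c] T"
  shows "T = [Res c]"
proof (cases n)
  case (Suc m)
  then show ?thesis
    using assms relpowp_Suc_D2 sstep_Res by metis
qed (use assms in simp)

lemma sstep_push_pop:
  assumes "fstep I tr F [X] [W, Y]" "sstep\<^sup>*\<^sup>* [Y] [Res c]"
    and "fstep I tr F [W, Res c] Z" "sstep\<^sup>*\<^sup>* Z [Res b]"
  shows "sstep\<^sup>*\<^sup>* [X] [Res b]"
proof -
  have "sstep\<^sup>*\<^sup>* [W, Y] [W, Res c]"
    using rtranclp_sstep_append_left[OF assms(2), of "[W]"] by simp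
  with assms(1) have "sstep\<^sup>*\<^sup>* [X] [W, Res c]"
    by (meson converse_rtranclp_into_rtranclp sstep_if_fstep)
  moreover have "sstep\<^sup>*\<^sup>* [W, Res c] [Res b]"
    using assms(3,4) by (meson converse_rtranclp_into_rtranclp sstep_if_fstep)
  ultimately show ?thesis
    by (rule rtranclp_trans)
qed

lemma sstep_if_eval_frame: "eval_frame X b \<Longrightarrow> sstep\<^sup>*\<^sup>* [X] [Res b]"
proof (induction rule: eval_frame.induct)
  case (ex as vs Pb Pq \<psi> b)
  then show ?case by (meson converse_rtranclp_into_rtranclp fstep.r8 sstep_if_fstep)
next
  case (it_none F' as vs Pb Pq \<psi>)
  then show ?case by (meson r_into_rtranclp fstep.r12 sstep_if_fstep)
qed (auto intro: sstep_push_pop fstep.intros sstep_if_fstep)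

lemma sstep_append_leftE:
  assumes "sstep (P @ S) T" "S \<noteq> []" "\<forall>c. S \<noteq> [Res c]"
  obtains S' where "T = P @ S'" "sstep S S'"
proof -
  obtain S0 X Y where e: "P @ S = S0 @ X" "T = S0 @ Y" and f: "fstep I tr F X Y"
    using assms(1) sstep_def by blast
  obtain us where "P = S0 @ us \<and> us @ S = X \<or> P @ us = S0 \<and> S = us @ X"
    using e(1) append_eq_append_conv2 by blast
  then show ?thesis
  proof
    assume split: "P = S0 @ us \<and> us @ S = X"
    with fstep_shape[OF f] assms(2,3) have "us = []"
      by (auto simp: append_eq_Cons_conv)
    with split e f show ?thesis
      using that sstep_if_fstep by auto
  next
    assume "P @ us = S0 \<and> S = us @ X"
    with e f show ?thesis
      by (metis append.assoc sstep_append_left sstep_if_fstep that)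
  qed
qed

lemma relpowp_sstep_not_Nil: "(sstep ^^ n) S T \<Longrightarrow> S \<noteq> [] \<Longrightarrow> T \<noteq> []"
  by (cases n) (auto dest: sstep_not_Nil)

lemma relpowp_sstep_append:
  assumes "(sstep ^^ n) (P @ S) T" "S \<noteq> []"
  shows "(\<exists>S'. T = P @ S' \<and> (sstep ^^ n) S S') \<or>
         (\<exists>k c. k \<le> n \<and> (sstep ^^ k) S [Res c] \<and> (sstep ^^ (n - k)) (P @ [Res c]) T)"
  using assms
proof (induction n arbitrary: S)
  case (Suc n)
  obtain U where first: "sstep (P @ S) U" and rest: "(sstep ^^ n) U T"
    using relpowp_Suc_D2[OF Suc.prems(1)] by blast
  show ?case
  proof (cases "\<exists>c. S = [Res c]")
    case True
    then show ?thesis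
      using Suc.prems(1) by (intro disjI2 exI[of _ 0]) auto
  next
    case False
    with first Suc.prems(2) obtain S2 where U: "U = P @ S2" and S2: "sstep S S2"
      by (auto elim: sstep_append_leftE)
    from Suc.IH[OF rest[unfolded U] sstep_not_Nil[OF S2]] show ?thesis
    proof (elim disjE exE conjE)
      fix S' assume "T = P @ S'" "(sstep ^^ n) S2 S'"
      then show ?thesis
        using relpowp_Suc_I2[of sstep, OF S2] by blast
    next
      fix k c assume "k \<le> n" "(sstep ^^ k) S2 [Res c]" "(sstep ^^ (n - k)) (P @ [Res c]) T"
      moreover from this(2) have "(sstep ^^ Suc k) S [Res c]"
        by (rule relpowp_Suc_I2[of sstep, OF S2])
      ultimately show ?thesis
        by (intro disjI2 exI[of _ "Suc k"] exI[of _ c]) (auto simp del: relpowp.simps)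
    qed
  qed
qed simp

lemma relpowp_sstep_pairE:
  assumes "(sstep ^^ n) [W, Y] [Res b]"
  obtains k j c Z where "k < n" "j < n" "(sstep ^^ k) [Y] [Res c]"
    "fstep I tr F [W, Res c] Z" "(sstep ^^ j) Z [Res b]"
proof -
  have "\<not> (\<exists>S'. [Res b] = [W] @ S' \<and> (sstep ^^ n) [Y] S')"
    using relpowp_sstep_not_Nil by fastforce
  moreover have "(\<exists>S'. [Res b] = [W] @ S' \<and> (sstep ^^ n) [Y] S') \<or>
      (\<exists>k c. k \<le> n \<and> (sstep ^^ k) [Y] [Res c] \<and> (sstep ^^ (n - k)) ([W] @ [Res c]) [Res b])"
    by (rule relpowp_sstep_append) (use assms in simp_all)
  ultimately obtain k c where
    "k \<le> n" "(sstep ^^ k) [Y] [Res c]" "(sstep ^^ (n - k)) [W, Res c] [Res b]"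
    by auto
  moreover from this(3) obtain j where j: "n - k = Suc j"
    by (cases "n - k") auto
  ultimately obtain Z where "sstep [W, Res c] Z" "(sstep ^^ j) Z [Res b]"
    using relpowp_Suc_D2[of j sstep] by auto
  with j \<open>(sstep ^^ k) [Y] [Res c]\<close> show ?thesis
    by (intro that[of k j c Z]) (auto intro: sstep_pair)
qed

lemma fstep_NotF_Res_iff: "fstep I tr F [NotF, Res c] Z \<longleftrightarrow> Z = [Res (\<not> c)]"
  by (auto elim: fstep.cases intro: fstep.r4)

lemma fstep_EvD_Res_iff:
  "fstep I tr F [EvD as vs \<psi>, Res c] Z \<longleftrightarrow> Z = (if c then [Res True] else [Ev as vs \<psi>])"
  by (cases c) (auto elim: fstep.cases intro: fstep.r6 fstep.r7)

lemma fstep_It_Res_iff: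
  "fstep I tr F [It F' as vs \<phi>, Res c] Z \<longleftrightarrow> Z = (if c then [Res True] else [It F' as vs \<phi>])"
  by (cases c) (auto elim: fstep.cases intro: fstep.r10 fstep.r11)

lemma eval_frame_if_relpowp_sstep:
  fixes X :: "('f, 'v, 'd) frame"
  assumes "(sstep ^^ n) [X] [Res b]" "\<forall>c. X \<noteq> Res c"
  shows "eval_frame X b"
  using assms
proof (induction n arbitrary: X b rule: less_induct)
  case (less n)
  obtain m where n: "n = Suc m"
    using less.prems by (cases n) auto
  with less.prems(1) obtain Y where "fstep I tr F [X] Y" and rest: "(sstep ^^ m) Y [Res b]"
    by (metis relpowp_Suc_D2 sstep_singleton)
  have IH: "eval_frame Z c" if "k \<le> m" "(sstep ^^ k) [Z] [Res c]" "\<forall>c. Z \<noteq> Res c"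
    for k and Z :: "('f, 'v, 'd) frame" and c
    using less.IH[of k Z c] that n by simp
  have push: "\<exists>c Z j. eval_frame Y c \<and> fstep I tr F [W, Res c] Z \<and> j \<le> m \<and> (sstep ^^ j) Z [Res b]"
    if "(sstep ^^ m) [W, Y] [Res b]" "\<forall>c. Y \<noteq> Res c" for W Y :: "('f, 'v, 'd) frame"
    using that(1)
  proof (rule relpowp_sstep_pairE)
    fix k j c Z
    assume "k < m" "j < m" "(sstep ^^ k) [Y] [Res c]"
      and "fstep I tr F [W, Res c] Z" "(sstep ^^ j) Z [Res b]"
    with IH that(2) show ?thesis
      by (meson less_imp_le)
  qed
  from \<open>fstep I tr F [X] Y\<close> show ?case
  proof (cases rule: fstep.cases)
    case (r3 as vs \<psi>)
    with push[OF rest[unfolded r3(2)]] show ?thesis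
      by (auto simp: fstep_NotF_Res_iff eval_frame_CNot_iff dest!: relpowp_sstep_Res)
  next
    case (r5 as vs \<psi>1 \<psi>2)
    with push[OF rest[unfolded r5(2)]] IH show ?thesis
      by (auto simp: fstep_EvD_Res_iff dest!: relpowp_sstep_Res split: if_splits
          intro: eval_frame.or_true eval_frame.or_false)
  next
    case (r9 F' as vs Pb Pq ws bs F'' \<psi>)
    with push[OF rest[unfolded r9(2)]] IH show ?thesis
      by (auto simp: fstep_It_Res_iff dest!: relpowp_sstep_Res split: if_splits
          intro: eval_frame.it_true eval_frame.it_false)
  next
    case (r8 as vs Pb Pq \<psi>)
    with rest IH[of m] show ?thesis
      by (simp add: eval_frame_CEx_iff)
  qed (use rest in \<open>auto dest!: relpowp_sstep_Res intro: eval_frame.intros\<close>)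
qed

lemma rtranclp_sstep_iff_eval_frame:
  "\<forall>c. X \<noteq> Res c \<Longrightarrow> sstep\<^sup>*\<^sup>* [X] [Res b] \<longleftrightarrow> eval_frame X b"
  by (metis rtranclp_power eval_frame_if_relpowp_sstep sstep_if_eval_frame)

lemma cstep_St_cases:
  assumes "cstep I tr (St F S) t"
  shows "(\<exists>T. t = St F T \<and> sstep S T) \<or> (\<exists>b. S = [Res b] \<and> t = Sat b)"
  using assms by (cases rule: cstep.cases) (auto simp: sstep_def)

lemma cstep_if_sstep: "sstep S T \<Longrightarrow> cstep I tr (St F S) (St F T)"
  by (auto simp: sstep_def intro: cstep.ctx)

lemma rtranclp_cstep_St_cases:
  assumes "(cstep I tr)\<^sup>*\<^sup>* (St F S) t"
  shows "(\<exists>T. t = St F T \<and> sstep\<^sup>*\<^sup>* S T) \<or> (\<exists>b. t = Sat b \<and> sstep\<^sup>*\<^sup>* S [Res b])"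
  using assms
proof (induction rule: rtranclp_induct)
  case (step u t)
  from step.IH show ?case
  proof (elim disjE exE conjE)
    fix T assume "u = St F T" "sstep\<^sup>*\<^sup>* S T"
    with step.hyps(2) show ?case
      by (auto dest: cstep_St_cases intro: rtranclp.rtrancl_into_rtrancl)
  next
    fix b assume "u = Sat b"
    with step.hyps(2) show ?case
      by (auto elim: cstep.cases)
  qed
qed simp

lemma rtranclp_cstep_if_rtranclp_sstep: "sstep\<^sup>*\<^sup>* S T \<Longrightarrow> (cstep I tr)\<^sup>*\<^sup>* (St F S) (St F T)"
  by (induction rule: rtranclp_induct) (auto intro: rtranclp.rtrancl_into_rtrancl cstep_if_sstep)

lemma nf_reach_init_Sat_iff: "nf_reach I tr (init \<phi> F) (Sat b) \<longleftrightarrow> eval_frame (Ev [] [] \<phi>) b"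
proof
  assume "nf_reach I tr (init \<phi> F) (Sat b)"
  then have "sstep\<^sup>*\<^sup>* [Ev [] [] \<phi>] [Res b]"
    unfolding nf_reach_def init_def by (auto dest: rtranclp_cstep_St_cases)
  then show "eval_frame (Ev [] [] \<phi>) b"
    by (simp add: rtranclp_sstep_iff_eval_frame)
next
  assume "eval_frame (Ev [] [] \<phi>) b"
  then have "(cstep I tr)\<^sup>*\<^sup>* (St F [Ev [] [] \<phi>]) (St F [Res b])"
    by (intro rtranclp_cstep_if_rtranclp_sstep sstep_if_eval_frame)
  then have "(cstep I tr)\<^sup>*\<^sup>* (St F [Ev [] [] \<phi>]) (Sat b)"
    using cstep.fin by (rule rtranclp.rtrancl_into_rtrancl)
  then show "nf_reach I tr (init \<phi> F) (Sat b)"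
    unfolding nf_reach_def init_def by (auto elim: cstep.cases)
qed

lemma wf_stack_sstep: "sstep S T \<Longrightarrow> wf_stack S \<Longrightarrow> wf_stack T"
  unfolding sstep_def
  by (auto elim!: fstep.cases simp: wf_stack_snoc wf_stack_snoc2 awaits_result_It_iff_can_act)

lemma wf_stack_progress:
  assumes "wf_stack S"
  shows "\<exists>u. cstep I tr (St F S) u"
proof -
  obtain S0 A where S: "S = S0 @ [A]" and waiting: "list_all awaits_result S0" and "can_act A"
    using assms unfolding wf_stack_def by blast
  have step_if_fstep: "\<exists>Y. fstep I tr F X Y \<Longrightarrow> \<exists>u. cstep I tr (St F (P @ X)) u" for P X
    by (auto intro: cstep.ctx)
  show ?thesis
  proof (cases A)
    case (Ev as vs \<phi>)
    then show ?thesis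
      using S step_if_fstep[of "[Ev as vs \<phi>]" S0] by (cases \<phi>) (auto intro: fstep.intros)
  next
    case (It F' as vs \<phi>)
    with \<open>can_act A\<close> obtain Pb Pq \<psi> where "\<phi> = CEx Pb Pq \<psi>"
      by (cases \<phi>) auto
    moreover have "\<exists>Y. fstep I tr F [It F' as vs (CEx Pb Pq \<psi>)] Y"
      using fstep.r9 fstep.r12 by metis
    ultimately show ?thesis
      using S It step_if_fstep by blast
  next
    case (Res c)
    show ?thesis
    proof (cases S0 rule: rev_cases)
      case Nil
      then show ?thesis
        using S Res by (auto intro: cstep.fin)
    next
      case (snoc S1 B)
      with waiting have "awaits_result B" by simp
      moreover have "S = S1 @ [B, Res c]"
        using S snoc Res by simp
      ultimately show ?thesis
        using step_if_fstep[of "[B, Res c]" S1]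
        by (cases B rule: awaits_result.cases; cases c) (auto intro: fstep.intros)
    qed
  qed (use \<open>can_act A\<close> in auto)
qed

lemma nf_reach_init_is_Sat:
  assumes "nf_reach I tr (init \<phi> F) t"
  shows "\<exists>b. t = Sat b"
proof (cases t)
  case (St F' T)
  with assms have reach: "sstep\<^sup>*\<^sup>* [Ev [] [] \<phi>] T"
    and irreducible: "\<nexists>u. cstep I tr (St F T) u"
    unfolding nf_reach_def init_def by (auto dest: rtranclp_cstep_St_cases)
  from reach have "wf_stack T"
    by (induction rule: rtranclp_induct)
      (auto intro: wf_stack_sstep simp: wf_stack_snoc[of "[]", simplified])
  with irreducible show ?thesis
    using wf_stack_progress by blast
qed simp

end

theorem lemma5:
  fixes I :: "'f \<Rightarrow> 'd list \<Rightarrow> 'd" and tr :: 'f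
    and F :: "'d multiset"
    and \<phi> \<phi>1 \<phi>2 \<psi> :: "('f, 'v) cond"
    and Pb Pq :: "('f, 'v) trm multiset"
  assumes "sentence \<phi>" and "sentence \<phi>1" and "sentence \<phi>2"
    and "sentence (CEx Pb Pq \<psi>)"
  shows
    "((reaches I tr \<phi> F True \<or> reaches I tr \<phi> F False) \<and>
     (\<forall>t. nf_reach I tr (init \<phi> F) t \<longrightarrow> t = Sat True \<or> t = Sat False)) \<and>
    (reaches I tr CFalse F False \<and> \<not> reaches I tr CFalse F True) \<and>
    (\<forall>B. reaches I tr \<phi> F B \<longleftrightarrow> reaches I tr (CNot \<phi>) F (\<not> B)) \<and>
    (reaches I tr (COr \<phi>1 \<phi>2) F True \<longleftrightarrow> reaches I tr \<phi>1 F True \<or> reaches I tr \<phi>2 F True) \<and>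
    (reaches I tr (COr \<phi>1 \<phi>2) F False \<longleftrightarrow> reaches I tr \<phi>1 F False \<and> reaches I tr \<phi>2 F False) \<and>
    (reaches I tr (CEx Pb Pq \<psi>) F True \<longleftrightarrow>
         (\<exists>\<sigma> F'. pat_subst Pb Pq \<sigma> \<and> F' + inst I \<sigma> (Pq + Pb) = F \<and>
                 reaches I tr (csubst \<sigma> \<psi>) F True)) \<and>
    (reaches I tr (CEx Pb Pq \<psi>) F False \<longleftrightarrow>
         (\<exists>(n::nat) (Fs :: nat \<Rightarrow> 'd multiset) (Gs :: nat \<Rightarrow> 'd multiset) (\<sigma>s :: nat \<Rightarrow> 'v \<Rightarrow> ('f, 'v) trm).
            Fs 0 = F \<and>
            (\<forall>i < n. pat_subst Pb Pq (\<sigma>s i) \<and>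
                      Fs (Suc i) = Gs i + inst I (\<sigma>s i) Pb \<and>
                      Fs i = Gs i + inst I (\<sigma>s i) (Pb + Pq)) \<and>
            (\<forall>i < n. reaches I tr (csubst (\<sigma>s i) \<psi>) F False) \<and>
            \<not> (\<exists>\<sigma> G. pat_subst Pb Pq \<sigma> \<and> Fs n = G + inst I \<sigma> (Pb + Pq)))) \<and>
    (reaches I tr (COr \<phi> (CNot \<phi>)) F True \<and>
       (reaches I tr \<phi> F True \<and> reaches I tr \<phi> F False \<longrightarrow> reaches I tr (COr \<phi> (CNot \<phi>)) F False))"
proof -
  have wf: "wf_cond \<phi>" "wf_cond \<phi>2" "wf_cond (CEx Pb Pq \<psi>)"
    using assms by (simp_all add: sentence_def)
  note reaches = nf_reach_init_Sat_iff[of I tr]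
  obtain c where c: "eval_frame I tr F (Ev [] [] \<phi>) c"
    using eval_frame_total[OF wf(1)] by blast
  \<comment> \<open>rule (5) evaluates the right disjunct first, so claim 4 needs it to terminate\<close>
  obtain c2 where c2: "eval_frame I tr F (Ev [] [] \<phi>2) c2"
    using eval_frame_total[OF wf(2)] by blast
  have normal_forms: "\<forall>t. nf_reach I tr (init \<phi> F) t \<longrightarrow> t = Sat True \<or> t = Sat False"
    using nf_reach_init_is_Sat by (metis (full_types))
  have ex_true: "eval_frame I tr F (It F [] [] (CEx Pb Pq \<psi>)) True \<longleftrightarrow>
      (\<exists>\<sigma> F'. pat_subst Pb Pq \<sigma> \<and> F' + inst I \<sigma> (Pq + Pb) = F \<and>
        eval_frame I tr F (Ev [] [] (csubst \<sigma> \<psi>)) True)"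
    unfolding eval_frame_It_Nil_True_iff[OF wf(3)] by (metis add.commute)
  show ?thesis
    unfolding reaches eval_frame_CEx_iff ex_true eval_frame_It_Nil_False_iff[OF wf(3)]
      refuting_run_def
    using c c2 normal_forms
    by (cases c; cases c2) (auto simp: eval_frame_CFalse_iff eval_frame_CNot_iff eval_frame_COr_iff)
qed

end
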